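(* Let $G=(V,E)$ be an undirected graph with two distinct vertices $s,t\in V$ and let $k$ be an integer. Let $G''$ be the graph obtained from $G$ by adding two new vertices $s',t'$ and the two edges $\{s',s\}$ and $\{t,t'\}$, and let $G'$ be the third power of $G''$. Then there is a set $S\subseteq V\setminus\{s,t\}$ such that $G-S$ has no $s$-$t$ path and $|N_G[S]|\le k$ if and only if there is a set $S'\subseteq V(G')\setminus\{s',t'\}$ such that $G'-S'$ has no $s'$-$t'$ path and $|S'|\le k$.
   Context: For $x\in\mathbb{N}$, the $x$-th power of a graph $H=(V,E)$ is the graph on vertex set $V$ in which two distinct vertices $u,v$ are adjacent if and only if their distance in $H$ is at most $x$. $N_G[S]=S\cup\bigcup_{v\in S}N_G(v)$ denotes the closed neighborhood of $S$ in $G$. *)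

theory Defs
  imports Main
begin

definition simple_graph :: "'a set \<Rightarrow> 'a set set \<Rightarrow> bool" where
  "simple_graph V E \<longleftrightarrow> (\<forall>e\<in>E. \<exists>u v. e = {u, v} \<and> u \<in> V \<and> v \<in> V \<and> u \<noteq> v)"

definition adj :: "'a set set \<Rightarrow> 'a \<Rightarrow> 'a \<Rightarrow> bool" where
  "adj E u v \<longleftrightarrow> {u, v} \<in> E"

definition has_path :: "'a set \<Rightarrow> 'a set set \<Rightarrow> 'a \<Rightarrow> 'a \<Rightarrow> bool" where
  "has_path V E u v \<longleftrightarrow> u \<in> V \<and> v \<in> V \<and> (\<lambda>x y. x \<in> V \<and> y \<in> V \<and> adj E x y)\<^sup>*\<^sup>* u v"

definition del_vertices_V :: "'a set \<Rightarrow> 'a set \<Rightarrow> 'a set" where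
  "del_vertices_V V S = V - S"

definition del_vertices_E :: "'a set set \<Rightarrow> 'a set \<Rightarrow> 'a set set" where
  "del_vertices_E E S = {e \<in> E. e \<inter> S = {}}"

definition power_edges :: "nat \<Rightarrow> 'a set \<Rightarrow> 'a set set \<Rightarrow> 'a set set" where
  "power_edges x V E = {{u, v} | u v. u \<in> V \<and> v \<in> V \<and> u \<noteq> v \<and>
      (\<exists>n\<le>x. ((\<lambda>a b. a \<in> V \<and> b \<in> V \<and> adj E a b) ^^ n) u v)}"

definition closed_nbhd :: "'a set set \<Rightarrow> 'a set \<Rightarrow> 'a set" where
  "closed_nbhd E S = S \<union> {v. \<exists>u\<in>S. adj E u v}"

end

theory Submission
  imports Defs
begin

text \<open>
  A walk of length at most three in \<open>G''\<close> consists of its endpoints and neighbours of them.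
  Hence if \<open>S\<close> separates \<open>s\<close> from \<open>t\<close> in \<open>G\<close>, then every edge of \<open>G' - N[S]\<close> is spanned by a
  walk of \<open>G'' - S\<close>, and contracting the pendant edges turns an \<open>s'\<close>-\<open>t'\<close> path of \<open>G' - N[S]\<close>
  into an \<open>s\<close>-\<open>t\<close> path of \<open>G - S\<close>. Conversely, if \<open>S'\<close> separates \<open>s'\<close> from \<open>t'\<close> in \<open>G'\<close>, let
  \<open>S\<close> be the set of inner vertices whose closed neighbourhood lies in \<open>S'\<close>, so \<open>N[S] \<subseteq> S'\<close>.
  Every vertex of \<open>G - S\<close> is in or adjacent to a vertex of \<open>G'' - S'\<close> (for \<open>s\<close> and \<open>t\<close> take
  \<open>s'\<close> and \<open>t'\<close>), and the cube joins such representatives of adjacent vertices; so an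
  \<open>s\<close>-\<open>t\<close> path of \<open>G - S\<close> lifts to an \<open>s'\<close>-\<open>t'\<close> path of \<open>G' - S'\<close>.
\<close>

lemma rtranclp_map:
  assumes "\<And>a b. R a b \<Longrightarrow> Q\<^sup>*\<^sup>* (f a) (f b)" and "R\<^sup>*\<^sup>* x y"
  shows "Q\<^sup>*\<^sup>* (f x) (f y)"
  using assms(2) by induction (auto intro: rtranclp_trans assms(1))

lemma relpowp_symp:
  assumes "symp R" and "(R ^^ n) a b"
  shows "(R ^^ n) b a"
  using assms(2)
proof (induction n arbitrary: a)
  case (Suc n)
  then obtain c where "R a c" "(R ^^ n) c b" using relpowp_Suc_D2 by metis
  then show ?case using Suc.IH assms(1) by (meson relpowp_Suc_I sympD)
qed simp

lemma relpowp_le3_if_reflclp: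
  assumes "R\<^sup>=\<^sup>= a b" and "R b c" and "R\<^sup>=\<^sup>= c d"
  shows "\<exists>n\<le>3. (R ^^ n) a d"
proof -
  have "(R ^^ 1) a d \<or> (R ^^ 2) a d \<or> (R ^^ 3) a d"
    using assms by (auto simp: numeral_eq_Suc relcompp_apply)
  moreover have "(1::nat) \<le> 3" "(2::nat) \<le> 3" by simp_all
  ultimately show ?thesis by blast
qed

lemma relpowp_le3_cases:
  assumes "n \<le> 3" and "(R ^^ n) u v"
  obtains "u = v" | "R u v" | w where "R u w" "R w v"
    | w1 w2 where "R u w1" "R w1 w2" "R w2 v"
proof -
  have "n = 0 \<or> n = 1 \<or> n = 2 \<or> n = 3" using assms(1) by arith
  then show ?thesis using assms(2) that by (auto simp: numeral_eq_Suc relcompp_apply)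
qed

lemma rtranclp_restrict_if_relpowp_le3:
  assumes "symp R" and "n \<le> 3" and "(R ^^ n) u v" and "u \<notin> N" and "v \<notin> N"
    and nbhd: "\<And>a b. R a b \<Longrightarrow> b \<in> S \<Longrightarrow> a \<in> N" and "S \<subseteq> N"
  shows "(\<lambda>a b. R a b \<and> a \<notin> S \<and> b \<notin> S)\<^sup>*\<^sup>* u v"
proof -
  let ?RS = "\<lambda>a b. R a b \<and> a \<notin> S \<and> b \<notin> S"
  have not_S: "b \<notin> S" if "R a b \<or> R b a" "a \<notin> N" for a b
    using nbhd that assms(1) by (blast dest: sympD)
  have uv: "u \<notin> S" "v \<notin> S" using assms(4,5,7) by auto
  from assms(2,3) show ?thesis
  proof (cases rule: relpowp_le3_cases)
    case 2
    then show ?thesis using uv by blast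
  next
    case (3 w)
    then have "w \<notin> S" using not_S assms(5) by blast
    then have "?RS u w" "?RS w v" using 3 uv by auto
    then show ?thesis by (rule rtranclp.rtrancl_into_rtrancl[OF r_into_rtranclp])
  next
    case (4 w1 w2)
    then have "w1 \<notin> S" "w2 \<notin> S" using not_S assms(4,5) by blast+
    then have "?RS u w1" "?RS w1 w2" "?RS w2 v" using 4 uv by auto
    then show ?thesis
      by (rule rtranclp.rtrancl_into_rtrancl[OF rtranclp.rtrancl_into_rtrancl[OF r_into_rtranclp]])
  qed simp
qed

definition adj_in :: "'a set \<Rightarrow> 'a set set \<Rightarrow> 'a \<Rightarrow> 'a \<Rightarrow> bool" where
  "adj_in V E a b \<longleftrightarrow> a \<in> V \<and> b \<in> V \<and> adj E a b"

lemma has_path_iff: "has_path V E u v \<longleftrightarrow> u \<in> V \<and> v \<in> V \<and> (adj_in V E)\<^sup>*\<^sup>* u v"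
  by (simp add: has_path_def adj_in_def[abs_def])

lemma adj_in_commute: "adj_in V E a b \<longleftrightarrow> adj_in V E b a"
  by (auto simp: adj_in_def adj_def insert_commute)

lemma symp_adj_in: "symp (adj_in V E)"
  by (simp add: symp_def adj_in_commute)

lemma adj_in_Diff: "adj_in (V - S) E = (\<lambda>a b. adj_in V E a b \<and> a \<notin> S \<and> b \<notin> S)"
  by (auto simp: fun_eq_iff adj_in_def)

lemma adj_in_del_vertices:
  "adj_in (del_vertices_V V S) (del_vertices_E E S) = adj_in (V - S) E"
  by (auto simp: fun_eq_iff adj_in_def adj_def del_vertices_V_def del_vertices_E_def)

lemma adj_in_power_edges:
  "adj_in V (power_edges x V E) u v \<longleftrightarrow>
     u \<in> V \<and> v \<in> V \<and> u \<noteq> v \<and> (\<exists>n\<le>x. (adj_in V E ^^ n) u v)"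
proof -
  have "{u, v} \<in> power_edges x V E \<longleftrightarrow> u \<noteq> v \<and> (\<exists>n\<le>x. (adj_in V E ^^ n) u v)"
    if "u \<in> V" "v \<in> V"
  proof
    assume "{u, v} \<in> power_edges x V E"
    then obtain a b n where "{u, v} = {a, b}" "a \<noteq> b" "n \<le> x" "(adj_in V E ^^ n) a b"
      unfolding power_edges_def adj_in_def[abs_def] by blast
    then show "u \<noteq> v \<and> (\<exists>n\<le>x. (adj_in V E ^^ n) u v)"
      by (fastforce simp: doubleton_eq_iff intro: relpowp_symp[OF symp_adj_in])
  next
    assume "u \<noteq> v \<and> (\<exists>n\<le>x. (adj_in V E ^^ n) u v)"
    then show "{u, v} \<in> power_edges x V E"
      using that unfolding power_edges_def adj_in_def[abs_def] by blast
  qed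
  then show ?thesis by (auto simp: adj_in_def adj_def)
qed

lemma rtranclp_adj_in_Diff_if_power3_path:
  assumes "(adj_in (V - N) (power_edges 3 V E))\<^sup>*\<^sup>* x y"
    and "\<And>a b. adj_in V E a b \<Longrightarrow> b \<in> S \<Longrightarrow> a \<in> N" and "S \<subseteq> N"
  shows "(adj_in (V - S) E)\<^sup>*\<^sup>* x y"
proof -
  have edge: "(adj_in (V - S) E)\<^sup>*\<^sup>* a b" if "adj_in (V - N) (power_edges 3 V E) a b" for a b
  proof -
    have ab: "a \<notin> N" "b \<notin> N" and "adj_in V (power_edges 3 V E) a b"
      using that by (simp_all add: adj_in_Diff)
    then obtain n where "n \<le> 3" "(adj_in V E ^^ n) a b"
      by (auto simp: adj_in_power_edges)
    from rtranclp_restrict_if_relpowp_le3[OF symp_adj_in this ab assms(2,3)]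
    show ?thesis unfolding adj_in_Diff .
  qed
  from assms(1) show ?thesis
  proof induction
    case (step y z)
    then show ?case using edge by (meson rtranclp_trans)
  qed simp
qed

lemma rtranclp_power3_if_reflclp:
  assumes "a \<in> V - S" and "d \<in> V - S"
    and "(adj_in V E)\<^sup>=\<^sup>= a b" and "adj_in V E b c" and "(adj_in V E)\<^sup>=\<^sup>= c d"
  shows "(adj_in (V - S) (power_edges 3 V E))\<^sup>*\<^sup>* a d"
proof (cases "a = d")
  case False
  then have "adj_in (V - S) (power_edges 3 V E) a d"
    using assms relpowp_le3_if_reflclp[OF assms(3-5)] by (simp add: adj_in_Diff adj_in_power_edges)
  then show ?thesis by simp
qed simp

locale pendant_terminals =
  fixes V :: "'a set" and E :: "'a set set" and s t s' t' :: 'a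
  assumes simple: "simple_graph V E"
    and s_in: "s \<in> V" and t_in: "t \<in> V"
    and s'_notin: "s' \<notin> V" and t'_notin: "t' \<notin> V" and s'_ne_t': "s' \<noteq> t'"
begin

abbreviation Vp :: "'a set" where "Vp \<equiv> V \<union> {s', t'}"

abbreviation Ep :: "'a set set" where "Ep \<equiv> E \<union> {{s', s}, {t, t'}}"

lemma edge_in_V: "{a, b} \<in> E \<Longrightarrow> a \<in> V \<and> b \<in> V"
  using simple by (fastforce simp: simple_graph_def doubleton_eq_iff)

lemma closed_nbhd_subset: "S \<subseteq> V \<Longrightarrow> closed_nbhd E S \<subseteq> V"
  using edge_in_V by (auto simp: closed_nbhd_def adj_def)

definition contract :: "'a \<Rightarrow> 'a" where
  "contract x = (if x = s' then s else if x = t' then t else x)"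

lemma rtranclp_contract:
  assumes "adj_in (Vp - S) Ep a b"
  shows "(adj_in (V - S) E)\<^sup>*\<^sup>* (contract a) (contract b)"
proof (cases "{a, b} \<in> E")
  case True
  with assms have "adj_in (V - S) E a b" "contract a = a" "contract b = b"
    using edge_in_V s'_notin t'_notin by (auto simp: adj_in_def adj_def contract_def)
  then show ?thesis by simp
next
  case False
  with assms have "contract a = contract b"
    using s_in t_in s'_notin t'_notin s'_ne_t'
    by (auto simp: adj_in_def adj_def contract_def doubleton_eq_iff)
  then show ?thesis by simp
qed

lemma no_power3_path_if_no_path:
  assumes "S \<subseteq> V - {s, t}"
    and "\<not> has_path (del_vertices_V V S) (del_vertices_E E S) s t"
  shows "\<not> has_path (del_vertices_V Vp (closed_nbhd E S))
      (del_vertices_E (power_edges 3 Vp Ep) (closed_nbhd E S)) s' t'"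
proof
  assume "has_path (del_vertices_V Vp (closed_nbhd E S))
      (del_vertices_E (power_edges 3 Vp Ep) (closed_nbhd E S)) s' t'"
  then have "(adj_in (Vp - closed_nbhd E S) (power_edges 3 Vp Ep))\<^sup>*\<^sup>* s' t'"
    by (simp add: has_path_iff adj_in_del_vertices)
  moreover have "a \<in> closed_nbhd E S" if "adj_in Vp Ep a b" "b \<in> S" for a b
  proof -
    have "{a, b} \<in> E"
      using that assms(1) s'_notin t'_notin by (auto simp: adj_in_def adj_def)
    then show ?thesis using that(2) by (auto simp: closed_nbhd_def adj_def insert_commute)
  qed
  ultimately have "(adj_in (Vp - S) Ep)\<^sup>*\<^sup>* s' t'"
    using rtranclp_adj_in_Diff_if_power3_path[of Vp "closed_nbhd E S" Ep]
    by (auto simp: closed_nbhd_def)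
  then have "(adj_in (V - S) E)\<^sup>*\<^sup>* (contract s') (contract t')"
    using rtranclp_map[of "adj_in (Vp - S) Ep" "adj_in (V - S) E" contract] rtranclp_contract
    by blast
  moreover have "s \<in> del_vertices_V V S" "t \<in> del_vertices_V V S"
    using assms(1) s_in t_in by (auto simp: del_vertices_V_def)
  ultimately show False
    using assms(2) s'_ne_t' by (simp add: has_path_iff adj_in_del_vertices contract_def)
qed

definition kernel :: "'a set \<Rightarrow> 'a set" where
  "kernel S' = {v \<in> V - {s, t}. closed_nbhd E {v} \<subseteq> S'}"

lemma closed_nbhd_kernel_subset: "closed_nbhd E (kernel S') \<subseteq> S'"
  by (auto simp: kernel_def closed_nbhd_def)

lemma kernel_subset: "kernel S' \<subseteq> V - {s, t}"
  by (auto simp: kernel_def)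

lemma representative:
  assumes "s' \<notin> S'" and "t' \<notin> S'" and "w \<in> V - kernel S'"
  obtains q where "q \<in> Vp - S'" and "(adj_in Vp Ep)\<^sup>=\<^sup>= w q"
proof -
  have "\<exists>q \<in> Vp - S'. (adj_in Vp Ep)\<^sup>=\<^sup>= w q"
  proof (cases "w = s \<or> w = t")
    case True
    then show ?thesis
      using assms by (auto simp: adj_in_def adj_def s_in t_in)
  next
    case False
    then obtain q where "q \<notin> S'" "q = w \<or> adj E w q"
      using assms(3) by (auto simp: kernel_def closed_nbhd_def)
    then show ?thesis
      using assms(3) edge_in_V by (auto simp: adj_in_def adj_def)
  qed
  then show ?thesis using that by blast
qed

lemma power3_path_to_representative:
  assumes "s' \<notin> S'" and "t' \<notin> S'"
    and "(adj_in (V - kernel S') E)\<^sup>*\<^sup>* s v"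
  shows "\<exists>q \<in> Vp - S'. (adj_in Vp Ep)\<^sup>=\<^sup>= v q \<and>
      (adj_in (Vp - S') (power_edges 3 Vp Ep))\<^sup>*\<^sup>* s' q"
  using assms(3)
proof induction
  case base
  show ?case using assms(1) s_in by (auto simp: adj_in_def adj_def)
next
  case (step v w)
  then obtain q where q: "q \<in> Vp - S'" "(adj_in Vp Ep)\<^sup>=\<^sup>= v q"
      "(adj_in (Vp - S') (power_edges 3 Vp Ep))\<^sup>*\<^sup>* s' q" by blast
  have w: "w \<in> V - kernel S'" and vw: "adj_in Vp Ep v w"
    using step.hyps(2) by (auto simp: adj_in_def adj_def)
  obtain q' where q': "q' \<in> Vp - S'" "(adj_in Vp Ep)\<^sup>=\<^sup>= w q'"
    by (rule representative[OF assms(1,2) w])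
  have "(adj_in Vp Ep)\<^sup>=\<^sup>= q v"
    using q(2) by (auto simp: adj_in_commute)
  from rtranclp_power3_if_reflclp[OF q(1) q'(1) this vw q'(2)]
  show ?case using q(3) q' rtranclp_trans by fast
qed

lemma no_path_if_no_power3_path:
  assumes "s' \<notin> S'" and "t' \<notin> S'"
    and "\<not> has_path (del_vertices_V Vp S') (del_vertices_E (power_edges 3 Vp Ep) S') s' t'"
  shows "\<not> has_path (del_vertices_V V (kernel S')) (del_vertices_E E (kernel S')) s t"
proof
  assume "has_path (del_vertices_V V (kernel S')) (del_vertices_E E (kernel S')) s t"
  then obtain q where q: "q \<in> Vp - S'" "(adj_in Vp Ep)\<^sup>=\<^sup>= t q"
      "(adj_in (Vp - S') (power_edges 3 Vp Ep))\<^sup>*\<^sup>* s' q"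
    using power3_path_to_representative assms(1,2)
    by (auto simp: has_path_iff adj_in_del_vertices)
  have "(adj_in Vp Ep)\<^sup>=\<^sup>= q t"
    using q(2) by (auto simp: adj_in_commute)
  moreover have "adj_in Vp Ep t t'"
    using t_in by (auto simp: adj_in_def adj_def)
  ultimately have "(adj_in (Vp - S') (power_edges 3 Vp Ep))\<^sup>*\<^sup>* q t'"
    using rtranclp_power3_if_reflclp[of q Vp S' t' Ep t t'] q(1) assms(2) by blast
  with q(3) have "(adj_in (Vp - S') (power_edges 3 Vp Ep))\<^sup>*\<^sup>* s' t'"
    by (rule rtranclp_trans)
  moreover have "s' \<in> del_vertices_V Vp S'" "t' \<in> del_vertices_V Vp S'"
    using assms(1,2) by (auto simp: del_vertices_V_def)
  ultimately show False
    using assms(3) by (simp add: has_path_iff adj_in_del_vertices)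
qed

end

theorem lemma1:
  fixes V :: "'a set" and E :: "'a set set" and s t s' t' :: 'a and k :: int
  assumes "finite V" and "simple_graph V E"
    and "s \<in> V" and "t \<in> V" and "s \<noteq> t"
    and "s' \<notin> V" and "t' \<notin> V" and "s' \<noteq> t'"
  shows "(\<exists>S. S \<subseteq> V - {s, t} \<and>
            \<not> has_path (del_vertices_V V S) (del_vertices_E E S) s t \<and>
            int (card (closed_nbhd E S)) \<le> k)
     \<longleftrightarrow>
         (\<exists>S'. S' \<subseteq> (V \<union> {s', t'}) - {s', t'} \<and>
            \<not> has_path (del_vertices_V (V \<union> {s', t'}) S')
                 (del_vertices_E (power_edges 3 (V \<union> {s', t'}) (E \<union> {{s', s}, {t, t'}})) S') s' t' \<and>
            int (card S') \<le> k)"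
proof -
  interpret pendant_terminals V E s t s' t'
    using assms by unfold_locales
  show ?thesis (is "?separator \<longleftrightarrow> ?separator_cube")
  proof
    assume ?separator
    then obtain S where S: "S \<subseteq> V - {s, t}"
        "\<not> has_path (del_vertices_V V S) (del_vertices_E E S) s t"
        "int (card (closed_nbhd E S)) \<le> k" by blast
    have "closed_nbhd E S \<subseteq> Vp - {s', t'}"
      using closed_nbhd_subset S(1) assms(6,7) by blast
    then show ?separator_cube
      using no_power3_path_if_no_path[OF S(1,2)] S(3)
      by (intro exI[of _ "closed_nbhd E S"] conjI)
  next
    assume ?separator_cube
    then obtain S' where S': "S' \<subseteq> Vp - {s', t'}"
        "\<not> has_path (del_vertices_V Vp S') (del_vertices_E (power_edges 3 Vp Ep) S') s' t'"
        "int (card S') \<le> k" by blast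
    then have "s' \<notin> S'" "t' \<notin> S'" by auto
    have "card (closed_nbhd E (kernel S')) \<le> card S'"
      using closed_nbhd_kernel_subset S'(1) assms(1)
      by (meson card_mono finite_Diff finite_Un finite.intros rev_finite_subset)
    then show ?separator
      using kernel_subset no_path_if_no_power3_path[OF \<open>s' \<notin> S'\<close> \<open>t' \<notin> S'\<close> S'(2)] S'(3)
      by (intro exI[of _ "kernel S'"] conjI) simp_all
  qed
qed

end
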